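(* Every $2$-regular bipartite graph is a mirror bipartite graph.
   Context: A bipartite graph $G=(V_1\cup V_2,E)$ with stable sets $V_1,V_2$ is mirror if there is a bijection $\varphi:V_1\to V_2$ such that for all $u,v\in V_1$, $u\varphi(v)\in E$ if and only if $\varphi(u)v\in E$. *)

theory Defs
  imports Main
begin

text \<open>A simple graph is given by a symmetric adjacency relation E. It is a (finite)
bipartite graph with stable sets V1, V2 if V1, V2 are disjoint finite sets, E is
symmetric, and every edge joins a vertex of V1 to a vertex of V2 (so the vertex set
is V1 \<union> V2, both sides are stable, and E is irreflexive).\<close>

definition bipartite_graph :: "'a set \<Rightarrow> 'a set \<Rightarrow> ('a \<Rightarrow> 'a \<Rightarrow> bool) \<Rightarrow> bool" where
  "bipartite_graph V1 V2 E \<longleftrightarrow>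
     finite V1 \<and> finite V2 \<and> V1 \<inter> V2 = {} \<and>
     (\<forall>u v. E u v \<longrightarrow> E v u) \<and>
     (\<forall>u v. E u v \<longrightarrow> (u \<in> V1 \<and> v \<in> V2) \<or> (u \<in> V2 \<and> v \<in> V1))"

definition regular_graph :: "'a set \<Rightarrow> ('a \<Rightarrow> 'a \<Rightarrow> bool) \<Rightarrow> nat \<Rightarrow> bool" where
  "regular_graph V E k \<longleftrightarrow> (\<forall>u\<in>V. card {v. E u v} = k)"

definition mirror :: "'a set \<Rightarrow> 'a set \<Rightarrow> ('a \<Rightarrow> 'a \<Rightarrow> bool) \<Rightarrow> bool" where
  "mirror V1 V2 E \<longleftrightarrow>
     (\<exists>\<phi>. bij_betw \<phi> V1 V2 \<and> (\<forall>u\<in>V1. \<forall>v\<in>V1. E u (\<phi> v) \<longleftrightarrow> E (\<phi> u) v))"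

end

theory Submission
  imports Defs
begin

text \<open>A 2-regular bipartite graph is a disjoint union of even cycles, and each even cycle has
a reflection exchanging its two colour classes. Such a side-swapping involutive automorphism r
yields the mirror bijection r restricted to V1. Instead of decomposing into cycles, we show by
induction that for every edge ua there is such an involution mapping u to a: if u lies on a
4-cycle, that cycle is a component and is split off; otherwise the path b-u-a-c through the
edge is contracted to a single edge bc, and the involution of the smaller graph that maps c
to b extends by swapping u and a.\<close>

definition mirror_involution :: "'a set \<Rightarrow> 'a set \<Rightarrow> ('a \<Rightarrow> 'a \<Rightarrow> bool) \<Rightarrow> ('a \<Rightarrow> 'a) \<Rightarrow> bool" where
  \<comment> \<open>only one direction of edge preservation is required: the converse follows from involutivity\<close>
  "mirror_involution V1 V2 E r \<longleftrightarrow>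
     (\<forall>x\<in>V1. r x \<in> V2) \<and> (\<forall>x\<in>V2. r x \<in> V1) \<and> (\<forall>x\<in>V1 \<union> V2. r (r x) = x) \<and>
     (\<forall>x\<in>V1 \<union> V2. \<forall>y\<in>V1 \<union> V2. E x y \<longrightarrow> E (r x) (r y))"

definition delete_vertices :: "'a set \<Rightarrow> ('a \<Rightarrow> 'a \<Rightarrow> bool) \<Rightarrow> 'a \<Rightarrow> 'a \<Rightarrow> bool" where
  "delete_vertices X E x y \<longleftrightarrow> E x y \<and> x \<notin> X \<and> y \<notin> X"

definition add_edge :: "'a \<Rightarrow> 'a \<Rightarrow> ('a \<Rightarrow> 'a \<Rightarrow> bool) \<Rightarrow> 'a \<Rightarrow> 'a \<Rightarrow> bool" where
  "add_edge b c E x y \<longleftrightarrow> E x y \<or> (x = b \<and> y = c) \<or> (x = c \<and> y = b)"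

lemma mirror_involution_imp_mirror:
  assumes "mirror_involution V1 V2 E r"
  shows "mirror V1 V2 E"
proof -
  have to_V2: "\<And>x. x \<in> V1 \<Longrightarrow> r x \<in> V2" and to_V1: "\<And>x. x \<in> V2 \<Longrightarrow> r x \<in> V1"
    and invol: "\<And>x. x \<in> V1 \<union> V2 \<Longrightarrow> r (r x) = x"
    and edge: "\<And>x y. x \<in> V1 \<union> V2 \<Longrightarrow> y \<in> V1 \<union> V2 \<Longrightarrow> E x y \<Longrightarrow> E (r x) (r y)"
    using assms unfolding mirror_involution_def by auto
  have "inj_on r V1"
    by (metis UnI1 inj_onI invol)
  moreover have "r ` V1 = V2"
    using to_V1 to_V2 invol by (auto intro!: image_eqI)
  moreover have "E u (r v) \<longleftrightarrow> E (r u) v" if "u \<in> V1" "v \<in> V1" for u v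
    using that edge[of u "r v"] edge[of "r u" v] invol to_V2 by auto
  ultimately show ?thesis
    unfolding mirror_def bij_betw_def by blast
qed

lemma regular_graph_2_neighbours:
  assumes "regular_graph V E 2" "x \<in> V" "E x y"
  shows "\<exists>z. z \<noteq> y \<and> (\<forall>v. E x v \<longleftrightarrow> v = y \<or> v = z)"
proof -
  have "card {v. E x v} = 2"
    using assms unfolding regular_graph_def by auto
  then obtain p q where pq: "{v. E x v} = {p, q}" "p \<noteq> q"
    by (auto simp: card_2_iff)
  then have "y = p \<or> y = q"
    using assms(3) by blast
  then show ?thesis
    using pq by (metis mem_Collect_eq insert_iff singleton_iff)
qed

lemma bipartite_graph_delete_vertices:
  "bipartite_graph V1 V2 E \<Longrightarrow> bipartite_graph (V1 - X) (V2 - X) (delete_vertices X E)"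
  unfolding bipartite_graph_def delete_vertices_def by auto

lemma bipartite_graph_add_edge:
  "bipartite_graph V1 V2 E \<Longrightarrow> b \<in> V2 \<Longrightarrow> c \<in> V1 \<Longrightarrow> bipartite_graph V1 V2 (add_edge b c E)"
  unfolding bipartite_graph_def add_edge_def by auto

lemma regular_graph_delete_vertices:
  assumes "regular_graph V E k" and "\<And>w v. w \<notin> X \<Longrightarrow> E w v \<Longrightarrow> v \<notin> X"
  shows "regular_graph (V - X) (delete_vertices X E) k"
proof -
  have "{v. delete_vertices X E w v} = {v. E w v}" if "w \<notin> X" for w
    using that assms(2) unfolding delete_vertices_def by auto
  then show ?thesis
    using assms(1) unfolding regular_graph_def by auto
qed

lemma regular_graph_contract_path:
  assumes reg: "regular_graph V E 2" and sym: "\<And>x y. E x y \<Longrightarrow> E y x"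
    and Nu: "\<And>v. E u v \<longleftrightarrow> v = a \<or> v = b" and Na: "\<And>v. E a v \<longleftrightarrow> v = u \<or> v = c"
    and "b \<notin> {u, a}" "c \<notin> {u, a}" "b \<noteq> c" "\<not> E b c"
  shows "regular_graph (V - {u, a}) (add_edge b c (delete_vertices {u, a} E)) 2"
  unfolding regular_graph_def
proof
  let ?E' = "add_edge b c (delete_vertices {u, a} E)"
  fix w assume w: "w \<in> V - {u, a}"
  have finN: "finite {v. E w v}"
    using reg w unfolding regular_graph_def by (intro card_ge_0_finite) auto
  have "E w u \<longleftrightarrow> w = b" "E w a \<longleftrightarrow> w = c"
    using Nu Na sym w by blast+
  then consider "w = b" "{v. ?E' w v} = insert c ({v. E w v} - {u})" "E w u" "\<not> E w c"
    | "w = c" "{v. ?E' w v} = insert b ({v. E w v} - {a})" "E w a" "\<not> E w b"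
    | "{v. ?E' w v} = {v. E w v}"
    using assms(5-8) sym w unfolding add_edge_def delete_vertices_def by auto
  then have "card {v. ?E' w v} = card {v. E w v}"
    by cases (use finN in \<open>auto simp: card_gt_0_iff intro!: Suc_pred\<close>)
  then show "card {v. ?E' w v} = 2"
    using reg w unfolding regular_graph_def by auto
qed

lemma mirror_involution_delete_vertices:
  "mirror_involution (V1 - X) (V2 - X) (delete_vertices X E) r \<Longrightarrow>
   mirror_involution (V1 - X) (V2 - X) E r"
  unfolding mirror_involution_def delete_vertices_def by fast

lemma mirror_involution_Un:
  assumes r: "mirror_involution A1 A2 E r" and s: "mirror_involution B1 B2 E s"
    and disj: "(A1 \<union> A2) \<inter> (B1 \<union> B2) = {}"
    and closed: "\<And>x y. E x y \<Longrightarrow> x \<in> A1 \<union> A2 \<longleftrightarrow> y \<in> A1 \<union> A2"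
  shows "mirror_involution (A1 \<union> B1) (A2 \<union> B2) E (\<lambda>x. if x \<in> A1 \<union> A2 then r x else s x)"
  unfolding mirror_involution_def
proof (intro conjI ballI impI)
  let ?t = "\<lambda>x. if x \<in> A1 \<union> A2 then r x else s x"
  have rA: "r x \<in> A1 \<union> A2" "r (r x) = x" if "x \<in> A1 \<union> A2" for x
    using r that unfolding mirror_involution_def by auto
  have sB: "s x \<in> B1 \<union> B2" "s x \<notin> A1 \<union> A2" "s (s x) = x" if "x \<in> B1 \<union> B2" for x
    using s that disj unfolding mirror_involution_def by auto
  show "?t x \<in> A2 \<union> B2" if "x \<in> A1 \<union> B1" for x
    using that r s disj unfolding mirror_involution_def by auto
  show "?t x \<in> A1 \<union> B1" if "x \<in> A2 \<union> B2" for x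
    using that r s disj unfolding mirror_involution_def by auto
  show "?t (?t x) = x" if "x \<in> (A1 \<union> B1) \<union> (A2 \<union> B2)" for x
  proof (cases "x \<in> A1 \<union> A2")
    case True
    then show ?thesis using rA[OF True] by simp
  next
    case False
    then have "x \<in> B1 \<union> B2" using that by blast
    then show ?thesis using sB[of x] False by simp
  qed
  show "E (?t x) (?t y)" if "x \<in> (A1 \<union> B1) \<union> (A2 \<union> B2)" "y \<in> (A1 \<union> B1) \<union> (A2 \<union> B2)" "E x y" for x y
  proof (cases "x \<in> A1 \<union> A2")
    case True
    then have "y \<in> A1 \<union> A2" using closed \<open>E x y\<close> by blast
    then show ?thesis using True r \<open>E x y\<close> unfolding mirror_involution_def by auto
  next
    case False
    then have "x \<in> B1 \<union> B2" "y \<in> B1 \<union> B2" "y \<notin> A1 \<union> A2" using closed that by blast+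
    then show ?thesis using False s \<open>E x y\<close> unfolding mirror_involution_def by auto
  qed
qed

lemma mirror_involution_four_cycle:
  assumes "bipartite_graph V1 V2 E" "u \<in> V1" "c \<in> V1" "a \<in> V2" "b \<in> V2" "u \<noteq> c" "a \<noteq> b"
    and "E u a" "E u b" "E c a" "E c b"
  shows "mirror_involution {u, c} {a, b} E (id(u := a, a := u, c := b, b := c))"
proof -
  let ?r = "id(u := a, a := u, c := b, b := c)"
  have "V1 \<inter> V2 = {}" and sym: "\<And>x y. E x y \<Longrightarrow> E y x"
    and sides: "\<And>x y. E x y \<Longrightarrow> (x \<in> V1 \<and> y \<in> V2) \<or> (x \<in> V2 \<and> y \<in> V1)"
    using assms(1) unfolding bipartite_graph_def by auto
  then have ne: "u \<noteq> a" "u \<noteq> b" "c \<noteq> a" "c \<noteq> b"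
    and non_edges: "\<not> E u c" "\<not> E c u" "\<not> E a b" "\<not> E b a" "\<And>x. \<not> E x x"
    using assms(2-5) by blast+
  have vals: "?r u = a" "?r a = u" "?r c = b" "?r b = c"
    using ne assms(6,7) by simp_all
  show ?thesis
    using assms(8-) sym[OF assms(8)] sym[OF assms(9)] sym[OF assms(10)] sym[OF assms(11)] non_edges
    unfolding mirror_involution_def ball_simps Un_insert_left Un_empty_left insert_iff
    by (simp add: vals ne ne[symmetric] assms(6,7))
qed

lemma regular_graph_2_four_cycle_closed:
  assumes reg: "regular_graph V E 2" and sym: "\<And>x y. E x y \<Longrightarrow> E y x" and "b \<in> V" "c \<in> V"
    and Nu: "\<And>v. E u v \<longleftrightarrow> v = a \<or> v = b" and Na: "\<And>v. E a v \<longleftrightarrow> v = u \<or> v = c"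
    and "E b c" "b \<noteq> a" "c \<noteq> u"
  shows "E x y \<Longrightarrow> x \<in> {u, c, a, b} \<longleftrightarrow> y \<in> {u, c, a, b}"
proof -
  obtain d where d: "\<And>v. E b v \<longleftrightarrow> v = c \<or> v = d"
    using regular_graph_2_neighbours[OF reg \<open>b \<in> V\<close> \<open>E b c\<close>] by auto
  obtain e where e: "\<And>v. E c v \<longleftrightarrow> v = b \<or> v = e"
    using regular_graph_2_neighbours[OF reg \<open>c \<in> V\<close> sym[OF \<open>E b c\<close>]] by auto
  have "E b u" "E c a"
    using sym Nu Na by blast+
  then have "d = u" "e = a"
    using d[of u] e[of a] assms(8,9) by auto
  then have "y \<in> {u, c, a, b}" if "x \<in> {u, c, a, b}" "E x y" for x y
    using that Nu Na d e by auto
  then show "E x y \<Longrightarrow> x \<in> {u, c, a, b} \<longleftrightarrow> y \<in> {u, c, a, b}"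
    using sym by blast
qed

lemma mirror_involution_add_four_cycle:
  assumes bip: "bipartite_graph V1 V2 E"
    and r': "mirror_involution (V1 - {u, c, a, b}) (V2 - {u, c, a, b}) E r'"
    and "u \<in> V1" "c \<in> V1" "a \<in> V2" "b \<in> V2" "u \<noteq> c" "a \<noteq> b"
    and "E u a" "E u b" "E c a" "E c b"
    and closed: "\<And>x y. E x y \<Longrightarrow> x \<in> {u, c, a, b} \<longleftrightarrow> y \<in> {u, c, a, b}"
  shows "\<exists>r. mirror_involution V1 V2 E r \<and> r u = a"
proof -
  let ?X = "{u, c, a, b}" and ?q = "id(u := a, a := u, c := b, b := c)"
  have disj: "V1 \<inter> V2 = {}"
    using bip unfolding bipartite_graph_def by auto
  have X: "{u, c} \<union> {a, b} = ?X"
    by auto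
  have "mirror_involution ({u, c} \<union> (V1 - ?X)) ({a, b} \<union> (V2 - ?X)) E
      (\<lambda>x. if x \<in> ?X then ?q x else r' x)"
    using mirror_involution_Un[OF mirror_involution_four_cycle[OF assms(1,3-12)] r'] closed
    unfolding X by blast
  moreover have "{u, c} \<union> (V1 - ?X) = V1" "{a, b} \<union> (V2 - ?X) = V2"
    using assms(3-6) disj by auto
  moreover have "?q u = a"
    using assms(3-7) disj by auto
  ultimately show ?thesis
    by force
qed

lemma mirror_involution_subdivide_edge:
  assumes bip: "bipartite_graph V1 V2 E"
    and r': "mirror_involution (V1 - {u, a}) (V2 - {u, a}) (add_edge b c (delete_vertices {u, a} E)) r'"
    and "r' c = b" and "u \<in> V1" "a \<in> V2" "b \<in> V2" "c \<in> V1" "c \<noteq> u"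
    and Nu: "\<And>v. E u v \<longleftrightarrow> v = a \<or> v = b" and Na: "\<And>v. E a v \<longleftrightarrow> v = u \<or> v = c"
    and "\<not> E b c"
  shows "mirror_involution V1 V2 E (r'(u := a, a := u))"
proof -
  let ?S = "{u, a}" and ?r = "r'(u := a, a := u)"
  have sym: "\<And>x y. E x y \<Longrightarrow> E y x" and disj: "V1 \<inter> V2 = {}"
    using bip unfolding bipartite_graph_def by auto
  have to_V2: "\<And>x. x \<in> V1 - ?S \<Longrightarrow> r' x \<in> V2 - ?S" and to_V1: "\<And>x. x \<in> V2 - ?S \<Longrightarrow> r' x \<in> V1 - ?S"
    and invol: "\<And>x. x \<in> (V1 - ?S) \<union> (V2 - ?S) \<Longrightarrow> r' (r' x) = x"
    and edge: "\<And>x y. x \<in> (V1 - ?S) \<union> (V2 - ?S) \<Longrightarrow> y \<in> (V1 - ?S) \<union> (V2 - ?S) \<Longrightarrow>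
      add_edge b c (delete_vertices ?S E) x y \<Longrightarrow> add_edge b c (delete_vertices ?S E) (r' x) (r' y)"
    using r' unfolding mirror_involution_def by auto
  have ne: "u \<noteq> a" "u \<noteq> b" "a \<noteq> c" "b \<noteq> c"
    using assms(4-7) disj by auto
  have bc: "r' b = c" "r' c = b"
    using invol[of c] \<open>r' c = b\<close> \<open>c \<in> V1\<close> \<open>c \<noteq> u\<close> ne by auto
  have r'_eq_b: "r' x = b \<longleftrightarrow> x = c" and r'_eq_c: "r' x = c \<longleftrightarrow> x = b"
    if "x \<in> (V1 - ?S) \<union> (V2 - ?S)" for x
    using invol[OF that] bc by metis+
  have edge_at_S: "E (?r x) (?r y)" if "x \<in> ?S" "E x y" for x y
    using that Nu Na bc ne by auto
  have edge_off_S: "E (?r x) (?r y)" if "x \<in> V1 \<union> V2 - ?S" "y \<in> V1 \<union> V2 - ?S" "E x y" for x y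
  proof -
    have xy: "x \<in> (V1 - ?S) \<union> (V2 - ?S)" "y \<in> (V1 - ?S) \<union> (V2 - ?S)"
      using that(1,2) by auto
    have "\<not> (x = b \<and> y = c)" "\<not> (x = c \<and> y = b)"
      using \<open>E x y\<close> \<open>\<not> E b c\<close> sym by blast+
    then have "\<not> (r' x = c \<and> r' y = b)" "\<not> (r' x = b \<and> r' y = c)"
      using r'_eq_b[OF xy(1)] r'_eq_c[OF xy(1)] r'_eq_b[OF xy(2)] r'_eq_c[OF xy(2)] by auto
    moreover have "add_edge b c (delete_vertices ?S E) (r' x) (r' y)"
      using edge[OF xy] that unfolding add_edge_def delete_vertices_def by auto
    moreover have "?r x = r' x" "?r y = r' y"
      using that by auto
    ultimately show ?thesis
      unfolding add_edge_def delete_vertices_def by auto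
  qed
  show ?thesis
    unfolding mirror_involution_def
  proof (intro conjI ballI impI)
    show "?r x \<in> V2" if "x \<in> V1" for x
      using that to_V2[of x] assms(4,5) disj by auto
    show "?r x \<in> V1" if "x \<in> V2" for x
      using that to_V1[of x] assms(4,5) disj by auto
    show "?r (?r x) = x" if "x \<in> V1 \<union> V2" for x
      using that to_V1[of x] to_V2[of x] invol[of x] ne by auto
    show "E (?r x) (?r y)" if "x \<in> V1 \<union> V2" "y \<in> V1 \<union> V2" "E x y" for x y
      using that edge_at_S[of x y] edge_at_S[of y x] edge_off_S[of x y] sym by blast
  qed
qed

lemma mirror_involution_exists:
  assumes "\<And>u a. u \<in> V1 \<Longrightarrow> E u a \<Longrightarrow> \<exists>r. mirror_involution V1 V2 E r \<and> r u = a"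
    and bip: "bipartite_graph V1 V2 E" and reg: "regular_graph (V1 \<union> V2) E k" and "0 < k"
  shows "\<exists>r. mirror_involution V1 V2 E r"
proof -
  have has_edge: "\<exists>w. E v w" if "v \<in> V1 \<union> V2" for v
    using reg that \<open>0 < k\<close> unfolding regular_graph_def by (metis Collect_empty_eq card.empty less_irrefl)
  show ?thesis
  proof (cases "V1 = {}")
    case True
    then have "V2 = {}"
      using has_edge bip unfolding bipartite_graph_def by blast
    with True show ?thesis
      unfolding mirror_involution_def by auto
  next
    case False
    then show ?thesis
      using assms(1) has_edge by blast
  qed
qed

lemma mirror_involution_through_edge:
  assumes "bipartite_graph V1 V2 E" "regular_graph (V1 \<union> V2) E 2" "u \<in> V1" "E u a"
  shows "\<exists>r. mirror_involution V1 V2 E r \<and> r u = a"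
  using assms
proof (induction "card V1" arbitrary: V1 V2 E u a rule: less_induct)
  case less
  note bip = less.prems(1) and reg = less.prems(2) and u = less.prems(3) and ua = less.prems(4)
  have fin: "finite V1" and disj: "V1 \<inter> V2 = {}" and sym: "\<And>x y. E x y \<Longrightarrow> E y x"
    and sides: "\<And>x y. E x y \<Longrightarrow> (x \<in> V1 \<and> y \<in> V2) \<or> (x \<in> V2 \<and> y \<in> V1)"
    using bip unfolding bipartite_graph_def by auto
  have a: "a \<in> V2"
    using sides[OF ua] u disj by auto
  obtain b where b: "b \<noteq> a" "\<And>v. E u v \<longleftrightarrow> v = a \<or> v = b"
    using regular_graph_2_neighbours[OF reg _ ua] u by auto
  obtain c where c: "c \<noteq> u" "\<And>v. E a v \<longleftrightarrow> v = u \<or> v = c"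
    using regular_graph_2_neighbours[OF reg _ sym[OF ua]] a by auto
  have bV: "b \<in> V2" and cV: "c \<in> V1"
    using sides[of u b] sides[of a c] b c u a disj by auto
  show ?case
  proof (cases "E b c")
    case True
    let ?X = "{u, c, a, b}"
    have closed: "E x y \<Longrightarrow> x \<in> ?X \<longleftrightarrow> y \<in> ?X" for x y
      using regular_graph_2_four_cycle_closed[OF reg sym _ _ b(2) c(2) True b(1) c(1)] bV cV by blast
    have bip': "bipartite_graph (V1 - ?X) (V2 - ?X) (delete_vertices ?X E)"
      using bipartite_graph_delete_vertices[OF bip] .
    have "regular_graph ((V1 \<union> V2) - ?X) (delete_vertices ?X E) 2"
      by (rule regular_graph_delete_vertices[OF reg]) (use closed in blast)
    then have reg': "regular_graph ((V1 - ?X) \<union> (V2 - ?X)) (delete_vertices ?X E) 2"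
      by (simp add: Un_Diff)
    have "card (V1 - ?X) < card V1"
      using u fin by (intro psubset_card_mono) auto
    then obtain r' where "mirror_involution (V1 - ?X) (V2 - ?X) (delete_vertices ?X E) r'"
      using mirror_involution_exists[OF _ bip' reg'] less.hyps bip' reg' by fastforce
    then have "mirror_involution (V1 - ?X) (V2 - ?X) E r'"
      by (rule mirror_involution_delete_vertices)
    moreover have "E u b" "E c a" "E c b"
      using b(2) c(2) sym[OF c(2)[of c, simplified]] sym[OF True] by auto
    ultimately show ?thesis
      using mirror_involution_add_four_cycle[OF bip _ u cV a bV c(1)[symmetric] b(1)[symmetric] ua]
        closed by blast
  next
    case False
    let ?S = "{u, a}"
    let ?E' = "add_edge b c (delete_vertices ?S E)"
    have outside: "b \<notin> ?S" "c \<notin> ?S" "b \<noteq> c"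
      using b(1) c(1) u a bV cV disj by auto
    have bip': "bipartite_graph (V1 - ?S) (V2 - ?S) ?E'"
      using bipartite_graph_add_edge[OF bipartite_graph_delete_vertices[OF bip]] bV cV outside by auto
    have reg': "regular_graph ((V1 - ?S) \<union> (V2 - ?S)) ?E' 2"
      using regular_graph_contract_path[OF reg sym b(2) c(2) outside False] by (simp add: Un_Diff)
    have "card (V1 - ?S) < card V1"
      using u fin by (intro psubset_card_mono) auto
    moreover have "c \<in> V1 - ?S" "?E' c b"
      using cV outside unfolding add_edge_def by auto
    ultimately obtain r' where "mirror_involution (V1 - ?S) (V2 - ?S) ?E' r'" "r' c = b"
      using less.hyps bip' reg' by blast
    then have "mirror_involution V1 V2 E (r'(u := a, a := u))"
      using mirror_involution_subdivide_edge[OF bip _ _ u a bV cV c(1) b(2) c(2) False] by blast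
    then show ?thesis
      by auto
  qed
qed

theorem lemma4:
  fixes V1 V2 :: "'a set" and E :: "'a \<Rightarrow> 'a \<Rightarrow> bool"
  assumes "bipartite_graph V1 V2 E"
    and "regular_graph (V1 \<union> V2) E 2"
  shows "mirror V1 V2 E"
proof -
  obtain r where "mirror_involution V1 V2 E r"
    using mirror_involution_exists[OF mirror_involution_through_edge[OF assms] assms] by auto
  then show ?thesis
    by (rule mirror_involution_imp_mirror)
qed

end
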